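(* Let $N\ge1$, $M=2^N$, and let $\mathcal{A}=\{a_0,\dots,a_{M-1}\}\subset\mathbb{C}$ be a constellation with an arbitrary labelling (in particular, not necessarily a Gray labelling). Suppose there is a family of rectangles in $\mathbb{C}$, each having four points of $\mathcal{A}$ as its vertices, such that: (1) the vertices of these rectangles cover all points of $\mathcal{A}$; (2) no two rectangles share a vertex; (3) in each rectangle, the labels of the two points of one diagonal pair both contain an odd number of $0$s in their $N$-bit binary representations and the labels of the two points of the other diagonal pair both contain an even number of $0$s. Then for all $y,h\in\mathbb{C}$, with $d_i=|y-ha_i|^2$, the coefficient $\bar d_{\{0,\dots,N-1\}}$ of the monomial $\prod_{n=0}^{N-1}z_n$ in the associated pseudo-Boolean function $f$ is zero.
   Context: For $i\in\{0,\dots,M-1\}$ write its $N$-bit binary representation as $b_0(i)\cdots b_{N-1}(i)$ with $b_0$ the most significant bit; this bit string is the label of $a_i$. Given $d_0,\dots,d_{M-1}$, define $f(z_0,\dots,z_{N-1})=\sum_{i}d_i\prod_{n=0}^{N-1}B_{i,n}(z_n)$, $z_n\in\{0,1\}$, with $B_{i,n}(z)=z$ if $b_n(i)=1$ and $1-z$ if $b_n(i)=0$. Its multilinear expansion is $f=\sum_{S\subseteq\{0,\dots,N-1\}}\bar d_S\prod_{n\in S}z_n$ with $\bar d_S=\sum_{i:\,b_n(i)=0\ \forall n\notin S}d_i\prod_{n\in S}(-1)^{1-b_n(i)}$. *)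

theory Defs
  imports Complex_Main
begin

text \<open>Bit n (n = 0 is the most significant bit) of the N-bit label of index i.\<close>
definition lbit :: "nat \<Rightarrow> nat \<Rightarrow> nat \<Rightarrow> bool" where
  "lbit N i n = bit i (N - 1 - n)"

definition num_zeros :: "nat \<Rightarrow> nat \<Rightarrow> nat" where
  "num_zeros N i = card {n. n < N \<and> \<not> lbit N i n}"

text \<open>Multilinear coefficient of the monomial prod_{n in S} z_n.\<close>
definition dbar :: "nat \<Rightarrow> (nat \<Rightarrow> real) \<Rightarrow> nat set \<Rightarrow> real" where
  "dbar N d S = (\<Sum>i\<in>{i. i < 2^N \<and> (\<forall>n<N. n \<notin> S \<longrightarrow> \<not> lbit N i n)}.
      d i * (\<Prod>n\<in>S. (if lbit N i n then 1 else -1)))"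

definition pbf :: "nat \<Rightarrow> (nat \<Rightarrow> real) \<Rightarrow> (nat \<Rightarrow> real) \<Rightarrow> real" where
  "pbf N d z = (\<Sum>i<2^N. d i * (\<Prod>n<N. if lbit N i n then z n else 1 - z n))"

text \<open>p, q, r, s (in cyclic order) are the vertices of a (non-degenerate) rectangle:
  four distinct points, opposite sides parallel and equal, right angle at p.
  Its diagonals are (p,r) and (q,s).\<close>
definition is_rectangle :: "complex \<Rightarrow> complex \<Rightarrow> complex \<Rightarrow> complex \<Rightarrow> bool" where
  "is_rectangle p q r s \<longleftrightarrow> distinct [p, q, r, s] \<and> q - p = r - s \<and>
     Re ((q - p) * cnj (s - p)) = 0"

end

theory Submission
  imports Defs "HOL-Analysis.Inner_Product"
begin

text \<open>The coefficient of the full monomial is the signed sum of the d i, the sign being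
  (-1) to the number of zeros of the label i.  The rectangles partition the indices, and in each
  rectangle one diagonal carries the sign +1 and the other -1.  Multiplication by h maps a
  rectangle to a (possibly degenerate) rectangle, so by the British flag theorem for the point y
  the values d i = |y - h a i|^2 have equal sums over the two diagonals, and every rectangle
  contributes zero.\<close>

lemma british_flag:
  fixes p q r s x :: "'a::real_inner"
  assumes "q - p = r - s" and "inner (q - p) (s - p) = 0"
  shows "(norm (x - p))\<^sup>2 + (norm (x - r))\<^sup>2 = (norm (x - q))\<^sup>2 + (norm (x - s))\<^sup>2"
proof -
  define u v w where "u = x - p" and "v = q - p" and "w = s - p"
  have "x - q = u - v" "x - s = u - w" "x - r = u - v - w"
    using assms(1) by (simp_all add: u_def v_def w_def algebra_simps)
  moreover have "inner v w = 0"
    using assms(2) by (simp add: v_def w_def)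
  ultimately show ?thesis
    by (simp add: u_def[symmetric] power2_norm_eq_inner inner_diff_left inner_diff_right inner_commute)
qed

lemma inner_complex_eq_Re_mult_cnj: "inner z w = Re (z * cnj w)"
  by (simp add: inner_complex_def)

lemma inner_mult_left_complex: "inner (h * z) (h * w) = (cmod h)\<^sup>2 * inner z w"
  unfolding inner_complex_def cmod_power2 by (simp add: algebra_simps power2_eq_square)

lemma is_rectangle_sum_sq_dist_diagonals:
  assumes "is_rectangle p q r s"
  shows "(cmod (y - h * p))\<^sup>2 + (cmod (y - h * r))\<^sup>2 = (cmod (y - h * q))\<^sup>2 + (cmod (y - h * s))\<^sup>2"
proof (rule british_flag)
  have sides: "q - p = r - s" and right_angle: "inner (q - p) (s - p) = 0"
    using assms unfolding is_rectangle_def inner_complex_eq_Re_mult_cnj by blast+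
  show "h * q - h * p = h * r - h * s"
    using sides by (simp flip: right_diff_distrib)
  show "inner (h * q - h * p) (h * s - h * p) = 0"
    using right_angle by (simp add: inner_mult_left_complex flip: right_diff_distrib)
qed

lemma prod_label_signs:
  "(\<Prod>n<N. if lbit N i n then (1::'a::comm_ring_1) else -1) = (-1) ^ num_zeros N i"
proof -
  have "(\<Prod>n<N. if lbit N i n then (1::'a) else -1)
      = (\<Prod>n\<in>{..<N} \<inter> {n. lbit N i n}. 1) * (\<Prod>n\<in>{..<N} \<inter> - {n. lbit N i n}. -1)"
    by (rule prod.If_cases) simp
  also have "{..<N} \<inter> - {n. lbit N i n} = {n. n < N \<and> \<not> lbit N i n}"
    by auto
  finally show ?thesis
    by (simp add: num_zeros_def)
qed

lemma dbar_full_eq_signed_sum: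
  "dbar N d {0..<N} = (\<Sum>i<2^N. (-1) ^ num_zeros N i * d i)"
  unfolding dbar_def by (rule sum.cong) (auto simp: atLeast0LessThan prod_label_signs)

lemma sum_Union_eq_0:
  assumes "finite (\<Union>R)" and "pairwise disjnt R" and "\<And>Q. Q \<in> R \<Longrightarrow> sum f Q = 0"
  shows "sum f (\<Union>R) = 0"
proof -
  have "\<forall>A\<in>R. finite A"
    using assms(1) by (meson Union_upper finite_subset)
  moreover have "\<forall>A\<in>R. \<forall>B\<in>R. A \<noteq> B \<longrightarrow> A \<inter> B = {}"
    using assms(2) by (auto simp: pairwise_def disjnt_def)
  ultimately have "sum f (\<Union>R) = (\<Sum>Q\<in>R. sum f Q)"
    by (simp add: sum.Union_disjoint)
  then show ?thesis
    using assms(3) by simp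
qed

lemma signed_sum_diagonals_eq_0:
  fixes d :: "'b \<Rightarrow> 'a::comm_ring_1" and k :: "'b \<Rightarrow> nat"
  assumes "distinct [p, q, r, s]" and "d p + d r = d q + d s"
    and "even (k p) = even (k r)" and "even (k q) = even (k s)" and "even (k p) \<noteq> even (k q)"
  shows "(\<Sum>i\<in>{p, q, r, s}. (-1) ^ k i * d i) = 0"
proof -
  have "(\<Sum>i\<in>{p, q, r, s}. (-1) ^ k i * d i)
      = (-1) ^ k p * (d p + d r) + (-1) ^ k q * (d q + d s)"
    using assms(1,3,4) by (simp add: algebra_simps minus_one_power_iff)
  also have "\<dots> = 0"
    using assms(2,5) by (cases "even (k p)") (simp_all add: minus_one_power_iff)
  finally show ?thesis .
qed

theorem corollary1:
  fixes N :: nat and a :: "nat \<Rightarrow> complex" and R :: "nat set set" and y h :: complex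
  assumes "N \<ge> 1"
    and "inj_on a {..<2^N}"
    and "\<forall>Q\<in>R. \<exists>p q r s. Q = {p, q, r, s} \<and> is_rectangle (a p) (a q) (a r) (a s) \<and>
           ((odd (num_zeros N p) \<and> odd (num_zeros N r) \<and> even (num_zeros N q) \<and> even (num_zeros N s)) \<or>
            (even (num_zeros N p) \<and> even (num_zeros N r) \<and> odd (num_zeros N q) \<and> odd (num_zeros N s)))"
    and "\<Union>R = {..<2^N}"
    and "pairwise disjnt R"
  shows "dbar N (\<lambda>i. (cmod (y - h * a i))\<^sup>2) {0..<N} = 0"
proof -
  define d where "d i = (cmod (y - h * a i))\<^sup>2" for i
  have "(\<Sum>i\<in>\<Union>R. (-1) ^ num_zeros N i * d i) = 0"
  proof (rule sum_Union_eq_0)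
    fix Q assume "Q \<in> R"
    then obtain p q r s where Q: "Q = {p, q, r, s}" and rect: "is_rectangle (a p) (a q) (a r) (a s)"
      and diagonal_parities:
        "(odd (num_zeros N p) \<and> odd (num_zeros N r) \<and> even (num_zeros N q) \<and> even (num_zeros N s)) \<or>
         (even (num_zeros N p) \<and> even (num_zeros N r) \<and> odd (num_zeros N q) \<and> odd (num_zeros N s))"
      using assms(3) by meson
    have "distinct [p, q, r, s]"
      using rect by (auto simp: is_rectangle_def)
    moreover have "d p + d r = d q + d s"
      unfolding d_def using rect by (rule is_rectangle_sum_sq_dist_diagonals)
    moreover have "even (num_zeros N p) = even (num_zeros N r)"
      "even (num_zeros N q) = even (num_zeros N s)" "even (num_zeros N p) \<noteq> even (num_zeros N q)"
      using diagonal_parities by auto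
    ultimately show "(\<Sum>i\<in>Q. (-1) ^ num_zeros N i * d i) = 0"
      unfolding Q by (rule signed_sum_diagonals_eq_0)
  next
    show "finite (\<Union>R)"
      using assms(4) by simp
  qed (fact assms(5))
  then show ?thesis
    using assms(4) by (simp add: d_def dbar_full_eq_signed_sum)
qed

end
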